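(* Let $(G,w)$ be a weighted undirected graph and let $G^{\#}$ denote its group inverse graph. (a) If $G$ is connected, then $G^{\#}$ is connected. (b) If $G$ is bipartite, then $G^{\#}$ is bipartite.
   Context: A weighted undirected graph $(G,w)$ on vertices $v_1,\dots,v_n$ assigns a nonzero real weight $w(v_iv_j)$ to each edge; its adjacency matrix $A$ is the $n\times n$ real symmetric matrix with $a_{ij}=w(v_iv_j)$ if $v_iv_j$ is an edge and $a_{ij}=0$ otherwise. The group inverse $A^{\#}$ of a square matrix $A$ is the unique matrix $X$ with $AXA=A$, $XAX=X$, $AX=XA$ (it exists for real symmetric $A$). The group inverse graph $G^{\#}$ has the same vertex set as $G$, with $v_iv_j$ an edge iff the $(i,j)$ entry of $A^{\#}$ is nonzero, the weight of that edge being that entry. *)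

theory Defs
  imports "HOL-Analysis.Analysis"
begin

text \<open>A weighted graph on vertex set 'n is represented by its real adjacency matrix A;
  v_i v_j is an edge iff the (i,j) entry is nonzero (its weight).\<close>

definition adj_rel :: "real^'n^'n \<Rightarrow> 'n \<Rightarrow> 'n \<Rightarrow> bool" where
  "adj_rel A i j \<longleftrightarrow> A $ i $ j \<noteq> 0"

definition graph_connected :: "real^'n^'n \<Rightarrow> bool" where
  "graph_connected A \<longleftrightarrow> (\<forall>i j. (adj_rel A)\<^sup>*\<^sup>* i j)"

definition graph_bipartite :: "real^'n^'n \<Rightarrow> bool" where
  "graph_bipartite A \<longleftrightarrow> (\<exists>S. \<forall>i j. adj_rel A i j \<longrightarrow> (i \<in> S \<longleftrightarrow> j \<notin> S))"

definition is_group_inverse :: "real^'n^'n \<Rightarrow> real^'n^'n \<Rightarrow> bool" where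
  "is_group_inverse A X \<longleftrightarrow> A ** X ** A = A \<and> X ** A ** X = X \<and> A ** X = X ** A"

definition group_inverse :: "real^'n^'n \<Rightarrow> real^'n^'n" where
  "group_inverse A = (THE X. is_group_inverse A X)"

end

theory Submission
  imports Defs
begin

text \<open>The group inverse is unique, and the relation "X is the group inverse of A" is symmetric
  in A and X and preserved by negation and by every similarity. Conjugating a matrix by the
  signature matrix D = diag(\<plusminus>1) of a vertex set S flips the signs of exactly the entries
  joining S to its complement; so D M D = M says that no edge leaves S, and D M D = -M says
  that S is one side of a bipartition. By uniqueness, D A D = A forces D A^# D = A^# and
  conversely, and D A D = -A forces D A^# D = -A^#. For symmetric A the group inverse exists:
  with K the orthogonal projection onto the kernel of A, the matrix A + K is invertible and
  A^# = (A + K)^-1 - K.\<close>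

lemma matrix_add_rdistrib: "((A::'a::semiring_1^'n^'m) + B) ** C = A ** C + B ** C"
  by (simp add: matrix_matrix_mult_def vec_eq_iff sum.distrib algebra_simps)

lemma matrix_diff_ldistrib: "(C::'a::ring_1^'n^'m) ** (A - B) = C ** A - C ** B"
  by (simp add: matrix_matrix_mult_def vec_eq_iff sum_subtractf algebra_simps)

lemma matrix_diff_rdistrib: "((A::'a::ring_1^'n^'m) - B) ** C = A ** C - B ** C"
  by (simp add: matrix_matrix_mult_def vec_eq_iff sum_subtractf algebra_simps)

lemma matrix_minus_left: "(- (A::'a::ring_1^'n^'m)) ** B = - (A ** B)"
  by (simp add: matrix_matrix_mult_def vec_eq_iff sum_negf)

lemma matrix_minus_right: "(A::'a::ring_1^'n^'m) ** (- B) = - (A ** B)"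
  by (simp add: matrix_matrix_mult_def vec_eq_iff sum_negf)

lemma is_group_inverse_commute: "is_group_inverse A X \<longleftrightarrow> is_group_inverse X A"
  unfolding is_group_inverse_def by auto

lemma is_group_inverse_unique:
  assumes "is_group_inverse A X" "is_group_inverse A Y"
  shows "X = Y"
proof -
  have x1: "A ** X ** A = A" and x2: "X ** A ** X = X" and x3: "A ** X = X ** A"
    and y1: "A ** Y ** A = A" and y2: "Y ** A ** Y = Y" and y3: "A ** Y = Y ** A"
    using assms unfolding is_group_inverse_def by auto
  have AX_AY: "A ** X = A ** Y"
  proof -
    have "A ** X = (X ** A) ** (Y ** A)"
      using x3 y1 by (metis matrix_mul_assoc)
    also have "\<dots> = (A ** X) ** (A ** Y)"
      by (simp only: x3 y3)
    also have "\<dots> = A ** Y"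
      using x1 by (simp add: matrix_mul_assoc)
    finally show ?thesis .
  qed
  have "X = (A ** Y) ** X"
    using x2 x3 AX_AY by (metis matrix_mul_assoc)
  also have "\<dots> = Y ** (A ** X)"
    by (simp only: y3 matrix_mul_assoc)
  also have "\<dots> = Y ** (A ** Y)"
    by (simp only: AX_AY)
  also have "\<dots> = Y"
    using y2 by (simp add: matrix_mul_assoc)
  finally show ?thesis .
qed

lemma group_inverse_eq: "is_group_inverse A X \<Longrightarrow> group_inverse A = X"
  unfolding group_inverse_def using is_group_inverse_unique by blast

lemma is_group_inverse_uminus:
  assumes "is_group_inverse A X"
  shows "is_group_inverse (- A) (- X)"
  using assms unfolding is_group_inverse_def
  by (metis matrix_minus_left matrix_minus_right minus_minus)

lemma is_group_inverse_transpose: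
  assumes "is_group_inverse A X"
  shows "is_group_inverse (transpose A) (transpose X)"
  using assms unfolding is_group_inverse_def
  by (metis matrix_transpose_mul matrix_mul_assoc)

lemma is_group_inverse_similar:
  assumes "is_group_inverse A X" and QP: "Q ** P = mat 1"
  shows "is_group_inverse (P ** A ** Q) (P ** X ** Q)"
proof -
  have QP': "Q ** (P ** R) = R" for R
    using QP by (simp add: matrix_mul_assoc)
  have AXA: "A ** (X ** (A ** R)) = A ** R" and XAX: "X ** (A ** (X ** R)) = X ** R"
    and AX: "A ** (X ** R) = X ** (A ** R)" for R
    using assms(1) unfolding is_group_inverse_def by (metis matrix_mul_assoc)+
  show ?thesis
    unfolding is_group_inverse_def
    by (simp only: matrix_mul_assoc[symmetric] QP' AXA XAX) (simp only: AX)
qed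

lemma kernel_projection_exists:
  fixes A :: "real^'n^'n"
  assumes A_sym: "transpose A = A"
  obtains K where "A ** K = 0" "K ** A = 0" "K ** K = K" "\<And>x. A *v x = 0 \<Longrightarrow> K *v x = x"
proof -
  have "subspace {x. A *v x = 0}"
    by (auto simp: subspace_def matrix_vector_right_distrib matrix_vector_mult_scaleR)
  then obtain B where orth: "pairwise orthogonal B" and unit: "\<And>x. x \<in> B \<Longrightarrow> norm x = 1"
    and "independent B" and span_B: "span B = {x. A *v x = 0}"
    using orthonormal_basis_subspace by metis
  then have "finite B"
    using independent_imp_finite by blast
  define K :: "real^'n^'n" where "K = (\<chi> i j. \<Sum>b\<in>B. b$i * b$j)"
  have K_apply: "K *v x = (\<Sum>b\<in>B. (x \<bullet> b) *\<^sub>R b)" for x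
    unfolding K_def
    by (simp add: vec_eq_iff matrix_vector_mult_def inner_vec_def sum_component
        sum_distrib_left sum_distrib_right mult_ac sum.swap[of _ B])
  have K_range: "A *v (K *v x) = 0" for x
    using span_B unfolding K_apply by (auto intro: span_sum span_mul span_base span_scale)
  have K_fix: "K *v x = x" if "A *v x = 0" for x
    unfolding K_apply using orthonormal_basis_expand[OF orth unit _ \<open>finite B\<close>] span_B that by auto
  have AK: "A ** K = 0"
    unfolding matrix_eq using K_range by (simp add: matrix_vector_mul_assoc[symmetric])
  moreover have "K ** A = 0"
  proof -
    have "transpose K = K"
      unfolding K_def transpose_def by (simp add: vec_eq_iff mult.commute)
    then have "K ** A = transpose (A ** K)"
      using A_sym by (simp add: matrix_transpose_mul)
    then show ?thesis
      using AK by (simp add: transpose_def vec_eq_iff)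
  qed
  moreover have "K ** K = K"
    unfolding matrix_eq using K_range K_fix by (simp add: matrix_vector_mul_assoc[symmetric])
  ultimately show ?thesis
    using that K_fix by blast
qed

lemma is_group_inverse_exists_of_kernel_projection:
  fixes A K :: "real^'n^'n"
  assumes AK: "A ** K = 0" and KA: "K ** A = 0" and KK: "K ** K = K"
    and K_fix: "\<And>x. A *v x = 0 \<Longrightarrow> K *v x = x"
  shows "\<exists>X. is_group_inverse A X"
proof -
  have "x = 0" if "(A + K) *v x = 0" for x
  proof -
    have "K *v x = K *v ((A + K) *v x)"
      by (simp add: matrix_vector_mul_assoc matrix_add_ldistrib KA KK)
    then have "K *v x = 0"
      using that by simp
    moreover from this have "A *v x = 0"
      using that by (simp add: matrix_vector_mult_add_rdistrib)
    ultimately show ?thesis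
      using K_fix by simp
  qed
  then obtain M where MA: "M ** (A + K) = mat 1"
    using matrix_left_invertible_ker by blast
  then have AM: "(A + K) ** M = mat 1"
    using matrix_left_right_inverse by blast
  have MK: "M ** K = K"
    using MA by (metis AK KK matrix_add_rdistrib matrix_mul_assoc matrix_mul_lid add_0)
  have KM: "K ** M = K"
    using AM by (metis KA KK matrix_add_ldistrib matrix_mul_assoc matrix_mul_rid add_0)
  have "A ** M = mat 1 - K"
    using AM KM by (simp add: matrix_add_rdistrib algebra_simps)
  then have AX: "A ** (M - K) = mat 1 - K"
    by (simp add: matrix_diff_ldistrib AK)
  have "M ** A = mat 1 - K"
    using MA MK by (simp add: matrix_add_ldistrib algebra_simps)
  then have XA: "(M - K) ** A = mat 1 - K"
    by (simp add: matrix_diff_rdistrib KA)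
  have "is_group_inverse A (M - K)"
    unfolding is_group_inverse_def AX XA
    by (simp add: matrix_diff_rdistrib matrix_diff_ldistrib KA KM KK)
  then show ?thesis ..
qed

lemma group_inverse_symmetric:
  fixes A :: "real^'n^'n"
  assumes "transpose A = A"
  shows "is_group_inverse A (group_inverse A)" and "transpose (group_inverse A) = group_inverse A"
proof -
  obtain X where X: "is_group_inverse A X"
    using kernel_projection_exists[OF assms] is_group_inverse_exists_of_kernel_projection by metis
  then show "is_group_inverse A (group_inverse A)"
    by (simp add: group_inverse_eq)
  show "transpose (group_inverse A) = group_inverse A"
    using is_group_inverse_transpose[OF X] assms X by (metis group_inverse_eq)
qed

definition sign_matrix :: "'n set \<Rightarrow> real^'n^'n" where
  "sign_matrix S = (\<chi> i j. if i = j then (if i \<in> S then 1 else -1) else 0)"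

lemma sign_matrix_mult_nth:
  fixes S :: "'n::finite set"
  shows "(sign_matrix S ** M) $ i $ j = (if i \<in> S then M $ i $ j else - M $ i $ j)"
proof -
  define s :: "'n::finite \<Rightarrow> real" where "s k = (if k \<in> S then 1 else -1)" for k
  have "sign_matrix S = (\<chi> i j. if i = j then s i else 0)"
    unfolding sign_matrix_def s_def ..
  then have "(sign_matrix S ** M) $ i $ j = s i * M $ i $ j"
    by (simp add: matrix_matrix_mult_def if_distrib if_distribR sum.delta cong: if_cong)
  then show ?thesis
    by (simp add: s_def)
qed

lemma mult_sign_matrix_nth:
  fixes S :: "'n::finite set"
  shows "(M ** sign_matrix S) $ i $ j = (if j \<in> S then M $ i $ j else - M $ i $ j)"
proof -
  define s :: "'n::finite \<Rightarrow> real" where "s k = (if k \<in> S then 1 else -1)" for k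
  have "sign_matrix S = (\<chi> i j. if i = j then s i else 0)"
    unfolding sign_matrix_def s_def ..
  then have "(M ** sign_matrix S) $ i $ j = M $ i $ j * s j"
    by (simp add: matrix_matrix_mult_def if_distrib if_distribR sum.delta' cong: if_cong)
  then show ?thesis
    by (simp add: s_def)
qed

lemma sign_matrix_conj_nth:
  "(sign_matrix S ** M ** sign_matrix S) $ i $ j =
     (if (i \<in> S) = (j \<in> S) then M $ i $ j else - M $ i $ j)"
  by (simp add: mult_sign_matrix_nth sign_matrix_mult_nth)

lemma sign_matrix_mult_self: "sign_matrix S ** sign_matrix S = mat 1"
  by (simp add: vec_eq_iff sign_matrix_mult_nth) (simp add: sign_matrix_def mat_def)

lemma sign_matrix_conj_eq_iff:
  "sign_matrix S ** M ** sign_matrix S = M \<longleftrightarrow> (\<forall>i j. (i \<in> S) \<noteq> (j \<in> S) \<longrightarrow> M $ i $ j = 0)"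
  by (auto simp: vec_eq_iff sign_matrix_conj_nth)

lemma sign_matrix_conj_eq_uminus_iff:
  "sign_matrix S ** M ** sign_matrix S = - M \<longleftrightarrow> (\<forall>i j. (i \<in> S) = (j \<in> S) \<longrightarrow> M $ i $ j = 0)"
  by (auto simp: vec_eq_iff sign_matrix_conj_nth)

lemma graph_bipartite_iff_sign_matrix:
  "graph_bipartite A \<longleftrightarrow> (\<exists>S. sign_matrix S ** A ** sign_matrix S = - A)"
  unfolding graph_bipartite_def sign_matrix_conj_eq_uminus_iff adj_rel_def by blast

lemma rtranclp_adj_rel_closed:
  assumes no_exit: "\<And>k l. k \<in> S \<Longrightarrow> l \<notin> S \<Longrightarrow> A $ k $ l = 0"
    and "(adj_rel A)\<^sup>*\<^sup>* i j" and "i \<in> S"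
  shows "j \<in> S"
  using assms(2,3)
proof induction
  case (step k l)
  then show ?case
    using no_exit unfolding adj_rel_def by blast
qed

lemma graph_connected_iff_sign_matrix:
  assumes "transpose A = A"
  shows "graph_connected A \<longleftrightarrow> (\<forall>S. sign_matrix S ** A ** sign_matrix S = A \<longrightarrow> S = {} \<or> S = UNIV)"
  unfolding sign_matrix_conj_eq_iff
proof (intro iffI allI impI)
  fix S :: "'a set"
  assume "graph_connected A" and no_cross: "\<forall>i j. (i \<in> S) \<noteq> (j \<in> S) \<longrightarrow> A $ i $ j = 0"
  show "S = {} \<or> S = UNIV"
  proof (rule ccontr)
    assume "\<not> (S = {} \<or> S = UNIV)"
    then obtain i j where "i \<in> S" "j \<notin> S"
      by blast
    moreover have "(adj_rel A)\<^sup>*\<^sup>* i j"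
      using \<open>graph_connected A\<close> unfolding graph_connected_def by blast
    ultimately show False
      using rtranclp_adj_rel_closed no_cross by metis
  qed
next
  assume no_cut: "\<forall>S. (\<forall>i j. (i \<in> S) \<noteq> (j \<in> S) \<longrightarrow> A $ i $ j = 0) \<longrightarrow> S = {} \<or> S = UNIV"
  show "graph_connected A"
    unfolding graph_connected_def
  proof (intro allI)
    fix i j
    define S where "S = {k. (adj_rel A)\<^sup>*\<^sup>* i k}"
    have S_closed: "l \<in> S" if "k \<in> S" "A $ k $ l \<noteq> 0" for k l
      using that unfolding S_def adj_rel_def by (simp add: rtranclp.rtrancl_into_rtrancl)
    have "A $ k $ l = A $ l $ k" for k l
      using assms by (metis transpose_def vec_lambda_beta)
    then have "A $ k $ l = 0" if "(k \<in> S) \<noteq> (l \<in> S)" for k l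
      using that S_closed by metis
    moreover have "i \<in> S"
      unfolding S_def by simp
    ultimately have "S = UNIV"
      using no_cut by blast
    then show "(adj_rel A)\<^sup>*\<^sup>* i j"
      unfolding S_def by blast
  qed
qed

lemma graph_connected_group_inverse:
  fixes A :: "real^'n^'n"
  assumes A_sym: "transpose A = A" and "graph_connected A"
  shows "graph_connected (group_inverse A)"
proof -
  let ?X = "group_inverse A"
  have X: "is_group_inverse ?X A"
    using group_inverse_symmetric(1)[OF A_sym] is_group_inverse_commute by blast
  have "S = {} \<or> S = UNIV" if "sign_matrix S ** ?X ** sign_matrix S = ?X" for S
  proof -
    have "is_group_inverse ?X (sign_matrix S ** A ** sign_matrix S)"
      using is_group_inverse_similar[OF X sign_matrix_mult_self[of S]] that by simp
    then have "sign_matrix S ** A ** sign_matrix S = A"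
      using X is_group_inverse_unique by blast
    then show ?thesis
      using assms graph_connected_iff_sign_matrix by blast
  qed
  then show ?thesis
    using graph_connected_iff_sign_matrix[OF group_inverse_symmetric(2)[OF A_sym]] by blast
qed

lemma graph_bipartite_group_inverse:
  fixes A :: "real^'n^'n"
  assumes A_sym: "transpose A = A" and "graph_bipartite A"
  shows "graph_bipartite (group_inverse A)"
proof -
  let ?X = "group_inverse A"
  have X: "is_group_inverse A ?X"
    using group_inverse_symmetric(1)[OF A_sym] .
  obtain S where "sign_matrix S ** A ** sign_matrix S = - A"
    using assms graph_bipartite_iff_sign_matrix by blast
  then have "is_group_inverse (- A) (sign_matrix S ** ?X ** sign_matrix S)"
    using is_group_inverse_similar[OF X sign_matrix_mult_self[of S]] by simp
  then have "sign_matrix S ** ?X ** sign_matrix S = - ?X"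
    using is_group_inverse_uminus[OF X] is_group_inverse_unique by blast
  then show ?thesis
    using graph_bipartite_iff_sign_matrix by blast
qed

theorem proposition2p1:
  fixes A :: "real^'n^'n"
  assumes "transpose A = A"
    and "\<forall>i. A $ i $ i = 0"
  shows "(graph_connected A \<longrightarrow> graph_connected (group_inverse A))
       \<and> (graph_bipartite A \<longrightarrow> graph_bipartite (group_inverse A))"
  using graph_connected_group_inverse[OF assms(1)] graph_bipartite_group_inverse[OF assms(1)]
  by blast

end
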